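(* Let $t\ge1$ and let $q_1,q_2,\dots,q_{2t}$ be distinct primes with $q_i\equiv 3\pmod 4$ for all $i$. Then the field $L=\mathbb{Q}(\sqrt{q_1q_2},\sqrt{q_3q_4},\dots,\sqrt{q_{2t-1}q_{2t}})$ contains at least $t$ totally positive units that are independent modulo squares in $L$; i.e. the deficiency satisfies $\delta(L)\ge t$.
   Context: For a totally real field $F$ of degree $n$ and $0\neq\alpha\in F$, the signature of $\alpha$ is the vector in $\mathbb{F}_2^n$ whose entry at a real embedding $v$ is $0$ if $v(\alpha)>0$ and $1$ if $v(\alpha)<0$. The signatures of the units of $F$ form a subspace of $\mathbb{F}_2^n$ whose dimension is the unit signature rank of $F$; the deficiency $\delta(F)$ is $n$ minus the unit signature rank, which equals the $\mathbb{F}_2$-rank of the group of totally positive units of $F$ modulo squares of units. *)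

theory Defs
  imports Complex_Main "HOL-Computational_Algebra.Computational_Algebra"
begin

definition is_subfield :: "real set \<Rightarrow> bool" where
  "is_subfield K \<longleftrightarrow> 0 \<in> K \<and> 1 \<in> K \<and>
     (\<forall>x\<in>K. \<forall>y\<in>K. x + y \<in> K \<and> x * y \<in> K) \<and>
     (\<forall>x\<in>K. - x \<in> K) \<and> (\<forall>x\<in>K. x \<noteq> 0 \<longrightarrow> inverse x \<in> K)"

definition gen_field :: "real set \<Rightarrow> real set" where
  "gen_field A = \<Inter>{K. is_subfield K \<and> A \<subseteq> K}"

text \<open>A real embedding of K: a ring homomorphism K \<rightarrow> R (values outside K irrelevant).\<close>
definition real_embedding :: "real set \<Rightarrow> (real \<Rightarrow> real) \<Rightarrow> bool" where
  "real_embedding K \<sigma> \<longleftrightarrow> \<sigma> 1 = 1 \<and>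
     (\<forall>x\<in>K. \<forall>y\<in>K. \<sigma> (x + y) = \<sigma> x + \<sigma> y \<and> \<sigma> (x * y) = \<sigma> x * \<sigma> y)"

definition unit_of_field :: "real set \<Rightarrow> real \<Rightarrow> bool" where
  "unit_of_field K u \<longleftrightarrow> u \<in> K \<and> u \<noteq> 0 \<and> algebraic_int u \<and> algebraic_int (inverse u)"

definition totally_positive :: "real set \<Rightarrow> real \<Rightarrow> bool" where
  "totally_positive K x \<longleftrightarrow> (\<forall>\<sigma>. real_embedding K \<sigma> \<longrightarrow> \<sigma> x > 0)"

end

theory Submission
  imports Defs "HOL-Analysis.Kronecker_Approximation_Theorem" "HOL-Number_Theory.Number_Theory"
begin

text \<open>
  Fix a pair \<open>p, q\<close> of the primes. Since \<open>p q\<close> is not a square, the Pell equation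
  \<open>a\<^sup>2 - p q b\<^sup>2 = 1\<close> has a solution with \<open>b > 0\<close> (pigeonhole on good rational approximations of
  \<open>\<surd>(p q)\<close>). Writing \<open>a = 2\<beta> + 1\<close>, \<open>b = 2 c\<close> gives \<open>\<beta> (\<beta> + 1) = p q c\<^sup>2\<close> with coprime
  factors; as \<open>-1\<close> is not a square modulo a prime \<open>\<equiv> 3 (mod 4)\<close>, either this yields a smaller Pell
  solution or \<open>p x\<^sup>2 = q y\<^sup>2 + 1\<close> up to swapping \<open>p\<close> and \<open>q\<close>. Then \<open>w = x \<surd>p + y \<surd>q\<close> has inverse
  \<open>x \<surd>p - y \<surd>q\<close>, and \<open>u = w\<^sup>2 = A + B \<surd>(p q)\<close> is a unit of \<open>L\<close> whose conjugates \<open>w\<^sup>2\<close> and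
  \<open>w\<^sup>-\<^sup>2\<close> are both positive.

  If \<open>\<Prod>\<^sub>i\<^sub>\<in>\<^sub>S u\<^sub>i = y\<^sup>2\<close> with \<open>y \<in> L\<close>, then \<open>\<Prod> w\<^sub>i = \<plusminus>y \<in> L\<close>, hence
  \<open>\<Prod> (w\<^sub>i + w\<^sub>i\<^sup>-\<^sup>1) = \<Prod> 2 x\<^sub>i \<surd>p\<^sub>i \<in> L\<close> and \<open>\<surd>(\<Prod>\<^sub>i\<^sub>\<in>\<^sub>S p\<^sub>i) \<in> L\<close>. An element of the
  multiquadratic field \<open>L = \<rat>(\<surd>m\<^sub>0, \<dots>, \<surd>m\<^sub>t\<^sub>-\<^sub>1)\<close> with rational square is a rational multiple of
  some \<open>\<Prod>\<^sub>j\<^sub>\<in>\<^sub>T \<surd>m\<^sub>j\<close>, so \<open>\<Prod>\<^sub>i\<^sub>\<in>\<^sub>S p\<^sub>i \<cdot> \<Prod>\<^sub>j\<^sub>\<in>\<^sub>T m\<^sub>j\<close> would be a square. This is impossible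
  because the primes are distinct and the first product takes exactly one prime from each pair in \<open>S\<close>.
\<close>

section \<open>Solutions of \<open>p x\<^sup>2 - q y\<^sup>2 = 1\<close>\<close>

lemma sqrt_nat_in_Rats_imp_square:
  assumes "sqrt (real n) \<in> \<rat>"
  shows "is_square n"
proof -
  obtain a b :: nat where b: "b \<noteq> 0" and ab: "\<bar>sqrt (real n)\<bar> = real a / real b"
    and cop: "coprime a b"
    using assms by (rule Rats_abs_nat_div_natE)
  have "real a = sqrt (real n) * real b"
    using ab b by simp
  then have "real (a^2) = real (n * b^2)"
    by (simp add: power_mult_distrib)
  then have eq: "a^2 = n * b^2"
    by (simp only: of_nat_eq_iff)
  have "coprime (a^2) (b^2)"
    using cop by simp
  moreover have "b^2 dvd a^2"
    unfolding eq by simp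
  ultimately have "is_unit (b^2)"
    using coprime_common_divisor dvd_refl by metis
  then have "b = 1"
    by simp
  with eq have "n = a^2"
    by simp
  then show ?thesis
    by (rule is_nth_powerI)
qed

lemma pell_solution_from_equal_norms:
  fixes h1 k1 h2 k2 m N :: int
  assumes "N \<noteq> 0" and N1: "N = h1^2 - m * k1^2" and N2: "N = h2^2 - m * k2^2"
    and "[h1 = h2] (mod N)" and "[k1 = k2] (mod N)"
  shows "\<exists>a b. a^2 - m * b^2 = 1 \<and> h1 * k2 - h2 * k1 = N * b"
proof -
  \<comment> \<open>\<open>(h1 - k1 \<surd>m)(h2 + k2 \<surd>m) = X + Y \<surd>m\<close> has norm \<open>N\<^sup>2\<close>, and \<open>N\<close> divides both \<open>X\<close> and \<open>Y\<close>.\<close>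
  obtain dh dk where "h2 - h1 = N * dh" and "k2 - k1 = N * dk"
    using assms(4,5) by (metis cong_iff_dvd_diff cong_sym_eq dvdE)
  then have h2: "h2 = h1 + N * dh" and k2: "k2 = k1 + N * dk"
    by simp_all
  define a where "a = 1 + h1 * dh - m * k1 * dk"
  define b where "b = h1 * dk - k1 * dh"
  have "h1 * h2 - m * k1 * k2 = (h1^2 - m * k1^2) + N * (h1 * dh - m * k1 * dk)"
    unfolding h2 k2 by (simp add: algebra_simps power2_eq_square)
  then have X: "h1 * h2 - m * k1 * k2 = N * a"
    unfolding a_def N1[symmetric] by (simp add: algebra_simps)
  have Y: "h1 * k2 - h2 * k1 = N * b"
    unfolding b_def h2 k2 by (simp add: algebra_simps)
  have "(h1 * h2 - m * k1 * k2)^2 - m * (h1 * k2 - h2 * k1)^2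
          = (h1^2 - m * k1^2) * (h2^2 - m * k2^2)"
    by (simp add: algebra_simps power2_eq_square)
  also have "\<dots> = N * N"
    using N1 N2 by simp
  finally have "N * N * (a^2 - m * b^2) = N * N * 1"
    unfolding X Y by (simp add: algebra_simps power2_eq_square)
  then have "a^2 - m * b^2 = 1"
    using \<open>N \<noteq> 0\<close> by simp
  with Y show ?thesis
    by blast
qed

lemma approx_set_sqrt_norm_bound:
  assumes "(h, k) \<in> approx_set (sqrt (real m))"
  shows "\<bar>h^2 - int m * k^2\<bar> \<le> 1 + 2 * sqrt (real m)"
proof -
  define \<theta> where "\<theta> = sqrt (real m)"
  have k: "k > 0" and hk: "\<bar>\<theta> - h / k\<bar> < 1 / k^2"
    using assms by (auto simp: approx_set_def \<theta>_def)
  have close: "\<bar>h - k * \<theta>\<bar> < 1 / k"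
  proof -
    have "\<bar>h - k * \<theta>\<bar> = k * \<bar>\<theta> - h / k\<bar>"
      using k by (simp add: field_simps flip: abs_mult)
    also have "\<dots> < k * (1 / k^2)"
      using hk k by (intro mult_strict_left_mono) simp_all
    finally show ?thesis
      using k by (simp add: power2_eq_square)
  qed
  have "k * \<theta> \<ge> 0"
    using k by (simp add: \<theta>_def)
  then have far: "\<bar>h + k * \<theta>\<bar> \<le> 1 / k + 2 * k * \<theta>"
    using close unfolding abs_le_iff abs_less_iff by linarith
  have "\<bar>real_of_int (h^2 - int m * k^2)\<bar> = \<bar>h - k * \<theta>\<bar> * \<bar>h + k * \<theta>\<bar>"
    by (simp add: \<theta>_def algebra_simps power2_eq_square flip: abs_mult)
  also have "\<dots> \<le> (1 / k) * (1 / k + 2 * k * \<theta>)"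
    using close far k by (intro mult_mono) auto
  also have "\<dots> = 1 / k^2 + 2 * \<theta>"
    using k by (simp add: field_simps power2_eq_square)
  also have "\<dots> \<le> 1 + 2 * \<theta>"
    using k by (simp add: power_le_one_iff divide_le_eq)
  finally show ?thesis
    by (simp add: \<theta>_def)
qed

lemma approx_set_cross_product_ne:
  assumes "(h1, k1) \<in> approx_set \<theta>" "(h2, k2) \<in> approx_set \<theta>" "(h1, k1) \<noteq> (h2, k2)"
  shows "h1 * k2 \<noteq> h2 * k1"
proof
  assume "h1 * k2 = h2 * k1"
  moreover have "k1 > 0" "k2 > 0" "coprime h1 k1" "coprime h2 k2"
    using assms(1,2) by (auto simp: approx_set_def)
  ultimately have "quotient_of (Rat.Fract h1 k1) = quotient_of (Rat.Fract h2 k2)"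
    using eq_rat(1)[of k1 k2 h1 h2] by simp
  with \<open>k1 > 0\<close> \<open>k2 > 0\<close> \<open>coprime h1 k1\<close> \<open>coprime h2 k2\<close> have "(h1, k1) = (h2, k2)"
    by (simp add: quotient_of_Fract)
  with assms(3) show False
    by contradiction
qed

lemma approx_set_sqrt_norm_nonzero:
  assumes "\<not> is_square m" and "(h, k) \<in> approx_set (sqrt (real m))"
  shows "h^2 - int m * k^2 \<noteq> 0"
proof
  assume "h^2 - int m * k^2 = 0"
  have "k > 0"
    using assms(2) by (simp add: approx_set_def)
  have "real_of_int \<bar>h\<bar> ^ 2 = (sqrt (real m) * k) ^ 2"
    using \<open>h^2 - int m * k^2 = 0\<close> by (simp add: power_mult_distrib flip: of_int_power)
  then have "real_of_int \<bar>h\<bar> = sqrt (real m) * k"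
    using \<open>k > 0\<close> by (subst (asm) power2_eq_iff_nonneg) auto
  then have "sqrt (real m) = real_of_int \<bar>h\<bar> / real_of_int k"
    using \<open>k > 0\<close> by (simp add: field_simps)
  then have "sqrt (real m) \<in> \<rat>"
    by simp
  with assms(1) show False
    using sqrt_nat_in_Rats_imp_square by blast
qed

lemma pigeonhole_norm_residues:
  fixes nrm :: "int \<Rightarrow> int \<Rightarrow> int"
  assumes "infinite A" and "\<And>h k. (h, k) \<in> A \<Longrightarrow> \<bar>nrm h k\<bar> \<le> M \<and> nrm h k \<noteq> 0"
  obtains h1 k1 h2 k2 where "(h1, k1) \<in> A" "(h2, k2) \<in> A" "(h1, k1) \<noteq> (h2, k2)"
    "nrm h2 k2 = nrm h1 k1" "[h1 = h2] (mod nrm h1 k1)" "[k1 = k2] (mod nrm h1 k1)"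
proof -
  define g where "g = (\<lambda>(h, k). (nrm h k, h mod nrm h k, k mod nrm h k))"
  have "g ` A \<subseteq> {-M..M} \<times> {-M..M} \<times> {-M..M}"
  proof (rule image_subsetI, clarify)
    fix h k assume "(h, k) \<in> A"
    then have N: "\<bar>nrm h k\<bar> \<le> M" "nrm h k \<noteq> 0"
      using assms(2) by blast+
    have "z mod nrm h k \<in> {-M..M}" for z
    proof (cases "nrm h k > 0")
      case True
      then show ?thesis
        using N pos_mod_bound[OF True, of z] pos_mod_sign[OF True, of z] by auto
    next
      case False
      then have neg: "nrm h k < 0"
        using N by linarith
      then show ?thesis
        using N neg_mod_bound[OF neg, of z] neg_mod_sign[OF neg, of z] by auto
    qed
    with N show "g (h, k) \<in> {-M..M} \<times> {-M..M} \<times> {-M..M}"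
      by (simp add: g_def abs_le_iff)
  qed
  then have "\<not> inj_on g A"
    using \<open>infinite A\<close> finite_imageD[of g A] finite_subset[of "g ` A"] by auto
  then obtain h1 k1 h2 k2 where "(h1, k1) \<in> A" "(h2, k2) \<in> A" "(h1, k1) \<noteq> (h2, k2)"
    and "g (h1, k1) = g (h2, k2)"
    unfolding inj_on_def by (metis surj_pair)
  moreover from this(4) have "nrm h2 k2 = nrm h1 k1" "[h1 = h2] (mod nrm h1 k1)" "[k1 = k2] (mod nrm h1 k1)"
    unfolding g_def cong_def by auto
  ultimately show thesis
    using that by blast
qed

lemma pell_solution_exists:
  assumes "\<not> is_square m"
  shows "\<exists>a b :: nat. b > 0 \<and> a^2 = m * b^2 + 1"
proof -
  define A where "A = approx_set (sqrt (real m))"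
  have "infinite A"
    using assms sqrt_nat_in_Rats_imp_square by (auto simp: A_def simp flip: rational_iff_finite_approx_set)
  moreover have "\<bar>h^2 - int m * k^2\<bar> \<le> \<lceil>1 + 2 * sqrt (real m)\<rceil> \<and> h^2 - int m * k^2 \<noteq> 0"
    if "(h, k) \<in> A" for h k
    using that approx_set_sqrt_norm_bound[of h k m] approx_set_sqrt_norm_nonzero[OF assms, of h k]
      le_of_int_ceiling[of "1 + 2 * sqrt (real m)"] unfolding A_def by linarith
  ultimately obtain h1 k1 h2 k2 where in_A: "(h1, k1) \<in> A" "(h2, k2) \<in> A"
    and "(h1, k1) \<noteq> (h2, k2)" and N: "h2^2 - int m * k2^2 = h1^2 - int m * k1^2"
    and "[h1 = h2] (mod h1^2 - int m * k1^2)" "[k1 = k2] (mod h1^2 - int m * k1^2)"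
    by (rule pigeonhole_norm_residues[of A "\<lambda>h k. h^2 - int m * k^2"])
  moreover have "h1^2 - int m * k1^2 \<noteq> 0"
    using approx_set_sqrt_norm_nonzero[OF assms] in_A(1) unfolding A_def by blast
  ultimately obtain a b where pell: "a^2 - int m * b^2 = 1"
    and "h1 * k2 - h2 * k1 = (h1^2 - int m * k1^2) * b"
    using pell_solution_from_equal_norms[OF _ refl N[symmetric]] by blast
  moreover have "h1 * k2 \<noteq> h2 * k1"
    using approx_set_cross_product_ne in_A \<open>(h1, k1) \<noteq> (h2, k2)\<close> unfolding A_def by blast
  ultimately have "b \<noteq> 0"
    by auto
  have "int ((nat \<bar>a\<bar>)^2) = int (m * (nat \<bar>b\<bar>)^2 + 1)"
    using pell by simp
  then have "(nat \<bar>a\<bar>)^2 = m * (nat \<bar>b\<bar>)^2 + 1"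
    by (simp only: of_nat_eq_iff)
  with \<open>b \<noteq> 0\<close> show ?thesis
    by (intro exI[of _ "nat \<bar>a\<bar>"] exI[of _ "nat \<bar>b\<bar>"]) simp
qed

lemma prime_mod_4_eq_3_not_dvd_square_plus_1:
  fixes p y :: nat
  assumes p: "prime p" and "p mod 4 = 3"
  shows "\<not> p dvd y^2 + 1"
proof
  assume dvd: "p dvd y^2 + 1"
  have odd_exp: "p - 1 = 2 * (2 * (p div 4) + 1)"
    using \<open>p mod 4 = 3\<close> by presburger
  have "\<not> p dvd y"
  proof
    assume "p dvd y"
    then have "p dvd y^2"
      by (simp add: power2_eq_square)
    with dvd have "p dvd 1"
      using dvd_add_right_iff[of p "y^2" 1] by blast
    with p show False
      by simp
  qed
  then have "[y ^ (p - 1) = 1] (mod p)"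
    by (rule fermat_theorem[OF p])
  then have "[int y ^ (p - 1) = 1] (mod int p)"
    using cong_int_iff[of "y ^ (p - 1)" 1 p] by simp
  moreover have "[int y ^ 2 = -1] (mod int p)"
  proof -
    have "int p dvd int (y^2 + 1)"
      using dvd by (simp only: int_dvd_int_iff)
    then show ?thesis
      by (simp add: cong_iff_dvd_diff add.commute)
  qed
  then have "[int y ^ (p - 1) = (-1) ^ (2 * (p div 4) + 1)] (mod int p)"
    unfolding odd_exp power_mult by (rule cong_pow)
  ultimately have "[1 = -1] (mod int p)"
    by (simp add: cong_sym_eq) (meson cong_sym cong_trans)
  then have "int p dvd 2"
    by (simp add: cong_iff_dvd_diff)
  then have "p dvd 2"
    by (metis int_dvd_int_iff of_nat_numeral)
  then have "p \<le> 2"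
    by (simp add: dvd_imp_le)
  with \<open>p mod 4 = 3\<close> show False
    by simp
qed

lemma square_mod_4: "(x :: nat)^2 mod 4 = (if even x then 0 else 1)"
proof (cases "even x")
  case True
  then show ?thesis
    by (auto elim!: evenE simp: power2_eq_square)
next
  case False
  then obtain k where "x = 2 * k + 1"
    by (elim oddE)
  then have "x^2 = 4 * (k * k + k) + 1"
    by (simp add: power2_eq_square algebra_simps)
  with False show ?thesis
    by simp
qed

lemma coprime_mult_eq_square_split:
  fixes A B d e c :: nat
  assumes "coprime A B" "A * B = d * e * c^2" "d dvd A" "e dvd B" "d > 0" "e > 0" "c > 0"
  shows "\<exists>x y. A = d * x^2 \<and> B = e * y^2"
proof -
  obtain u v where A: "A = d * u" and B: "B = e * v"
    using assms(3,4) by (elim dvdE)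
  have uv: "u * v = c^2"
    using assms(2,5,6) unfolding A B by (simp add: ac_simps)
  have "coprime u v"
    using assms(1) unfolding A B by simp
  moreover have "u > 0" "v > 0"
    using uv \<open>c > 0\<close> by (auto intro!: gr0I)
  ultimately have "is_square u" "is_square v"
    using uv is_nth_power_mult_coprime_natD[of u v 2] by auto
  with A B show ?thesis
    by (auto elim!: is_nth_powerE)
qed

lemma coprime_mult_eq_prime_pair_times_square:
  fixes A B p q c :: nat
  assumes p: "prime p" and q: "prime q" and "p \<noteq> q"
    and "coprime A B" and AB: "A * B = p * q * c^2" and "c > 0"
  shows "\<exists>x y. (A = p * x^2 \<and> B = q * y^2) \<or> (A = q * x^2 \<and> B = p * y^2)
    \<or> (A = p * q * x^2 \<and> B = y^2) \<or> (A = x^2 \<and> B = p * q * y^2)"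
proof -
  note split = coprime_mult_eq_square_split[OF \<open>coprime A B\<close> _ _ _ _ _ \<open>c > 0\<close>]
  have "p > 0" "q > 0"
    using p q by (simp_all add: prime_gt_0_nat)
  have "p dvd A * B" "q dvd A * B"
    unfolding AB by simp_all
  then have "p dvd A \<or> p dvd B" "q dvd A \<or> q dvd B"
    using p q prime_dvd_mult_iff by blast+
  moreover have "coprime p q"
    using primes_coprime[OF p q \<open>p \<noteq> q\<close>] .
  ultimately consider "p dvd A" "q dvd B" | "q dvd A" "p dvd B" | "p * q dvd A" | "p * q dvd B"
    using divides_mult by blast
  then show ?thesis
  proof cases
    case 1
    then show ?thesis
      using split[of p q] AB \<open>p > 0\<close> \<open>q > 0\<close> by blast
  next
    case 2
    moreover have "A * B = q * p * c^2"
      using AB by (simp add: ac_simps)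
    ultimately show ?thesis
      using split[of q p] \<open>p > 0\<close> \<open>q > 0\<close> by blast
  next
    case 3
    then show ?thesis
      using split[of "p * q" 1] AB \<open>p > 0\<close> \<open>q > 0\<close> by simp blast
  next
    case 4
    then show ?thesis
      using split[of 1 "p * q"] AB \<open>p > 0\<close> \<open>q > 0\<close> by simp blast
  qed
qed

lemma pell_mod_4_parity:
  fixes a b m :: nat
  assumes "m mod 4 = 1" and "a^2 = m * b^2 + 1"
  shows "even b" "odd a"
proof -
  have "(m * b^2) mod 4 = b^2 mod 4"
    using assms(1) by (metis mod_mult_left_eq mult_1)
  then have "a^2 mod 4 = (b^2 mod 4 + 1) mod 4"
    using assms(2) by (metis mod_add_left_eq)
  then show "even b" "odd a"
    unfolding square_mod_4 by (auto split: if_splits)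
qed

lemma mixed_pell_descent:
  fixes p q :: nat
  assumes p: "prime p" and q: "prime q" and "p \<noteq> q" and "p mod 4 = 3" and "q mod 4 = 3"
  shows "b > 0 \<Longrightarrow> a^2 = p * q * b^2 + 1 \<Longrightarrow> \<exists>x y. p * x^2 = q * y^2 + 1 \<or> q * x^2 = p * y^2 + 1"
proof (induction b arbitrary: a rule: less_induct)
  case (less b)
  have "(p * q) mod 4 = 1"
    using assms(4,5) by (simp add: mod_mult_eq[symmetric])
  then have "even b" "odd a"
    using pell_mod_4_parity less.prems(2) by blast+
  \<comment> \<open>With \<open>a = 2\<beta> + 1\<close> and \<open>b = 2c\<close>, the Pell equation becomes \<open>(\<beta> + 1) \<beta> = p q c\<^sup>2\<close> with coprime factors.\<close>
  define \<beta> c where "\<beta> = a div 2" and "c = b div 2"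
  have "a = 2 * \<beta> + 1" "b = 2 * c"
    using \<open>even b\<close> \<open>odd a\<close> by (simp_all add: \<beta>_def c_def)
  then have "4 * ((\<beta> + 1) * \<beta>) = 4 * (p * q * c^2)"
    using less.prems(2) by (simp add: power2_eq_square algebra_simps)
  then have prod: "(\<beta> + 1) * \<beta> = p * q * c^2"
    by simp
  moreover have "c > 0"
    using less.prems(1) \<open>b = 2 * c\<close> by simp
  moreover have "coprime (\<beta> + 1) \<beta>"
    by simp
  ultimately obtain x y where "(\<beta> + 1 = p * x^2 \<and> \<beta> = q * y^2) \<or> (\<beta> + 1 = q * x^2 \<and> \<beta> = p * y^2)
      \<or> (\<beta> + 1 = p * q * x^2 \<and> \<beta> = y^2) \<or> (\<beta> + 1 = x^2 \<and> \<beta> = p * q * y^2)"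
    using coprime_mult_eq_prime_pair_times_square[OF p q \<open>p \<noteq> q\<close>] by blast
  then show ?case
  proof (elim disjE conjE)
    assume "\<beta> + 1 = p * q * x^2" "\<beta> = y^2"
    then have "p dvd y^2 + 1"
      by (metis dvd_triv_left mult.assoc)
    with prime_mod_4_eq_3_not_dvd_square_plus_1[OF p \<open>p mod 4 = 3\<close>] show ?thesis
      by blast
  next
    assume x: "\<beta> + 1 = x^2" and y: "\<beta> = p * q * y^2"
    \<comment> \<open>A smaller Pell solution: descend.\<close>
    have "p * q * (x * y)^2 = p * q * c^2"
      using prod[unfolded x, unfolded y] by (simp add: power_mult_distrib ac_simps)
    then have "x * y = c"
      using p q by (simp add: prime_gt_0_nat power2_eq_iff_nonneg)
    then have "0 < y" "y < b"
      using \<open>c > 0\<close> \<open>b = 2 * c\<close> by (auto intro!: gr0I dest!: sym[of "x * y"])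
    moreover have "x^2 = p * q * y^2 + 1"
      using x y by simp
    ultimately show ?thesis
      using less.IH by blast
  qed (metis add.commute)+
qed

lemma mixed_pell_solvable:
  fixes p q :: nat
  assumes "prime p" "prime q" "p \<noteq> q" "p mod 4 = 3" "q mod 4 = 3"
  shows "\<exists>x y. p * x^2 = q * y^2 + 1 \<or> q * x^2 = p * y^2 + 1"
proof -
  have "\<not> is_square (p * q)"
  proof
    assume "is_square (p * q)"
    moreover have "coprime p q" "p > 0" "q > 0"
      using assms(1-3) by (simp_all add: primes_coprime prime_gt_0_nat)
    ultimately have "is_square (p ^ 1)"
      using is_nth_power_mult_coprime_natD(1)[of p q 2] by simp
    then show False
      unfolding is_nth_power_prime_power_nat_iff[OF \<open>prime p\<close>] by simp
  qed
  then obtain a b where "b > 0" "a^2 = p * q * b^2 + 1"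
    using pell_solution_exists[of "p * q"] by blast
  then show ?thesis
    using mixed_pell_descent[OF assms] by blast
qed

section \<open>Subfields of the reals and quadratic extensions\<close>

lemma subfield_0: "is_subfield K \<Longrightarrow> 0 \<in> K"
  and subfield_1: "is_subfield K \<Longrightarrow> 1 \<in> K"
  and subfield_add: "is_subfield K \<Longrightarrow> x \<in> K \<Longrightarrow> y \<in> K \<Longrightarrow> x + y \<in> K"
  and subfield_mult: "is_subfield K \<Longrightarrow> x \<in> K \<Longrightarrow> y \<in> K \<Longrightarrow> x * y \<in> K"
  and subfield_uminus: "is_subfield K \<Longrightarrow> x \<in> K \<Longrightarrow> - x \<in> K"
  by (auto simp: is_subfield_def)

lemma subfield_inverse: "is_subfield K \<Longrightarrow> x \<in> K \<Longrightarrow> inverse x \<in> K"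
  by (cases "x = 0") (auto simp: is_subfield_def)

lemma subfield_diff: "is_subfield K \<Longrightarrow> x \<in> K \<Longrightarrow> y \<in> K \<Longrightarrow> x - y \<in> K"
  using subfield_add[of K x "- y"] subfield_uminus[of K y] by simp

lemma subfield_divide: "is_subfield K \<Longrightarrow> x \<in> K \<Longrightarrow> y \<in> K \<Longrightarrow> x / y \<in> K"
  using subfield_mult[of K x "inverse y"] subfield_inverse[of K y] by (simp add: divide_inverse)

lemma subfield_prod: "is_subfield K \<Longrightarrow> (\<And>i. i \<in> A \<Longrightarrow> f i \<in> K) \<Longrightarrow> prod f A \<in> K"
  by (induction A rule: infinite_finite_induct) (auto intro: subfield_1 subfield_mult)

lemma subfield_of_nat: "is_subfield K \<Longrightarrow> of_nat n \<in> K"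
  by (induction n) (auto intro: subfield_0 subfield_1 subfield_add)

lemma subfield_of_int: "is_subfield K \<Longrightarrow> of_int n \<in> K"
  by (cases n rule: int_cases2) (auto intro: subfield_of_nat subfield_uminus)

lemma Rats_subset_subfield: "is_subfield K \<Longrightarrow> \<rat> \<subseteq> K"
  by (auto elim!: Rats_cases' intro!: subfield_divide subfield_of_int)

lemma is_subfield_Rats: "is_subfield \<rat>"
  by (auto simp: is_subfield_def)

lemma gen_field_least: "is_subfield K \<Longrightarrow> A \<subseteq> K \<Longrightarrow> gen_field A \<subseteq> K"
  unfolding gen_field_def by blast

lemma gen_field_superset: "A \<subseteq> gen_field A"
  unfolding gen_field_def by blast

lemma is_subfield_gen_field: "is_subfield (gen_field A)"
  unfolding gen_field_def is_subfield_def by blast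

definition quad_ext :: "real set \<Rightarrow> real \<Rightarrow> real set" where
  "quad_ext K s = {a + b * s | a b. a \<in> K \<and> b \<in> K}"

lemma quad_ext_superset: "is_subfield K \<Longrightarrow> K \<subseteq> quad_ext K s"
  unfolding quad_ext_def by (force intro: subfield_0)

lemma quad_ext_gen: "is_subfield K \<Longrightarrow> s \<in> quad_ext K s"
  unfolding quad_ext_def by (force intro: subfield_0 subfield_1)

lemma quad_ext_inverse:
  assumes K: "is_subfield K" and "s^2 \<in> K" "s \<notin> K" and "x \<in> quad_ext K s"
  shows "inverse x \<in> quad_ext K s"
proof -
  obtain a b where x: "x = a + b * s" and "a \<in> K" "b \<in> K"
    using assms(4) by (auto simp: quad_ext_def)
  \<comment> \<open>Multiply by the conjugate \<open>a - b s\<close>; the norm \<open>a\<^sup>2 - b\<^sup>2 s\<^sup>2\<close> vanishes only if \<open>x = 0\<close> or \<open>s \<in> K\<close>.\<close>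
  define n where "n = a^2 - b^2 * s^2"
  have "n \<in> K"
    unfolding n_def power2_eq_square using K \<open>a \<in> K\<close> \<open>b \<in> K\<close> \<open>s^2 \<in> K\<close>
    by (auto intro!: subfield_diff subfield_mult simp: power2_eq_square)
  show ?thesis
  proof (cases "n = 0")
    case True
    have "b = 0"
    proof (rule ccontr)
      assume "b \<noteq> 0"
      with True have "s^2 = (a / b)^2"
        by (simp add: n_def field_simps)
      then have "s = a / b \<or> s = - (a / b)"
        by (simp add: power2_eq_iff)
      with K \<open>a \<in> K\<close> \<open>b \<in> K\<close> \<open>s \<notin> K\<close> show False
        by (auto intro: subfield_divide subfield_uminus)
    qed
    with True have "x = 0"
      by (simp add: n_def x)
    with K show ?thesis
      using quad_ext_superset subfield_0 by auto
  next
    case False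
    have "x * (a - b * s) = n"
      unfolding x n_def by (simp add: algebra_simps power2_eq_square)
    with False have "x * ((a - b * s) / n) = 1"
      by simp
    then have "inverse x = (a - b * s) / n"
      by (rule inverse_unique)
    then have "inverse x = a / n + (- (b / n)) * s"
      by (simp add: diff_divide_distrib)
    moreover have "a / n \<in> K" "- (b / n) \<in> K"
      using K \<open>a \<in> K\<close> \<open>b \<in> K\<close> \<open>n \<in> K\<close> by (auto intro: subfield_divide subfield_uminus)
    ultimately show ?thesis
      unfolding quad_ext_def by blast
  qed
qed

lemma is_subfield_quad_ext:
  assumes K: "is_subfield K" and "s^2 \<in> K"
  shows "is_subfield (quad_ext K s)"
proof (cases "s \<in> K")
  case True
  then have "quad_ext K s = K"
    using K quad_ext_superset[OF K] by (auto simp: quad_ext_def intro: subfield_add subfield_mult)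
  with K show ?thesis
    by simp
next
  case False
  have ring_closed: "x + y \<in> quad_ext K s \<and> x * y \<in> quad_ext K s \<and> - x \<in> quad_ext K s"
    if xs: "x \<in> quad_ext K s" and ys: "y \<in> quad_ext K s" for x y
  proof -
    obtain a b c d where x: "x = a + b * s" and "a \<in> K" "b \<in> K"
      and y: "y = c + d * s" and "c \<in> K" "d \<in> K"
      using xs ys unfolding quad_ext_def by blast
    have "x + y = (a + c) + (b + d) * s" "- x = (- a) + (- b) * s"
      "x * y = (a * c + b * d * s^2) + (a * d + b * c) * s"
      unfolding x y by (simp_all add: algebra_simps power2_eq_square)
    moreover have "a + c \<in> K" "b + d \<in> K" "- a \<in> K" "- b \<in> K"
      "a * c + b * d * s^2 \<in> K" "a * d + b * c \<in> K"
      using K \<open>a \<in> K\<close> \<open>b \<in> K\<close> \<open>c \<in> K\<close> \<open>d \<in> K\<close> \<open>s^2 \<in> K\<close>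
      by (auto intro!: subfield_add subfield_mult subfield_uminus)
    ultimately show ?thesis
      unfolding quad_ext_def by blast
  qed
  show ?thesis
    unfolding is_subfield_def
    using ring_closed quad_ext_inverse[OF K \<open>s^2 \<in> K\<close> False]
      quad_ext_superset[OF K] subfield_0[OF K] subfield_1[OF K] by blast
qed

lemma quad_ext_square_in_base:
  assumes K: "is_subfield K" and "s^2 \<in> K" and "z \<in> quad_ext K s" and "z^2 \<in> K"
  shows "z \<in> K \<or> z * s \<in> K"
proof (cases "s \<in> K")
  case True
  with assms show ?thesis
    by (auto simp: quad_ext_def intro: subfield_add subfield_mult)
next
  case False
  obtain a b where z: "z = a + b * s" and "a \<in> K" "b \<in> K"
    using assms(3) by (auto simp: quad_ext_def)
  \<comment> \<open>The \<open>s\<close>-coordinate \<open>2 a b\<close> of \<open>z\<^sup>2\<close> must vanish.\<close>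
  have "a * b = 0"
  proof (rule ccontr)
    assume "a * b \<noteq> 0"
    have "z^2 = (a^2 + b^2 * s^2) + (2 * a * b) * s"
      unfolding z by (simp add: power2_eq_square algebra_simps)
    with \<open>a * b \<noteq> 0\<close> have "s = (z^2 - (a^2 + b^2 * s^2)) / (2 * a * b)"
      by (simp add: field_simps)
    moreover have "(z^2 - (a^2 + b^2 * s^2)) / (2 * a * b) \<in> K"
      using K \<open>a \<in> K\<close> \<open>b \<in> K\<close> \<open>s^2 \<in> K\<close> \<open>z^2 \<in> K\<close> subfield_of_nat[OF K, of 2]
      by (auto simp: power2_eq_square intro!: subfield_divide subfield_diff subfield_add subfield_mult)
    ultimately show False
      using False by simp
  qed
  then consider "a = 0" | "b = 0"
    by auto
  then show ?thesis
  proof cases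
    case 1
    then have "z * s = b * s^2"
      by (simp add: z power2_eq_square)
    then show ?thesis
      using K \<open>b \<in> K\<close> \<open>s^2 \<in> K\<close> by (simp add: subfield_mult)
  next
    case 2
    then show ?thesis
      using z \<open>a \<in> K\<close> by simp
  qed
qed

lemma gen_field_insert_subset_quad_ext:
  assumes "s^2 \<in> gen_field A"
  shows "gen_field (insert s A) \<subseteq> quad_ext (gen_field A) s"
proof -
  have K: "is_subfield (gen_field A)"
    by (rule is_subfield_gen_field)
  show ?thesis
    using is_subfield_quad_ext[OF K assms] quad_ext_gen[OF K, of s]
      quad_ext_superset[OF K, of s] gen_field_superset[of A]
    by (intro gen_field_least) auto
qed

lemma gen_field_square_in_Rats:
  fixes r :: "nat \<Rightarrow> real"
  assumes "\<And>j. j < t \<Longrightarrow> (r j)^2 \<in> \<rat>" and "z \<in> gen_field (r ` {..<t})" and "z^2 \<in> \<rat>"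
  shows "\<exists>T \<subseteq> {..<t}. z * (\<Prod>j\<in>T. r j) \<in> \<rat>"
  using assms
proof (induction t arbitrary: z)
  case 0
  have "gen_field {} \<subseteq> \<rat>"
    by (rule gen_field_least[OF is_subfield_Rats]) simp
  with "0.prems"(2) show ?case
    by (intro exI[of _ "{}"]) auto
next
  case (Suc t)
  define K where "K = gen_field (r ` {..<t})"
  have K: "is_subfield K"
    unfolding K_def by (rule is_subfield_gen_field)
  have r_sq: "\<And>j. j < t \<Longrightarrow> (r j)^2 \<in> \<rat>"
    using Suc.prems(1) by simp
  have "(r t)^2 \<in> K" "z^2 \<in> K"
    using Suc.prems(1,3) Rats_subset_subfield[OF K] by auto
  moreover have "z \<in> quad_ext K (r t)"
    using Suc.prems(2) gen_field_insert_subset_quad_ext[OF \<open>(r t)^2 \<in> K\<close>[unfolded K_def]]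
    by (auto simp: K_def lessThan_Suc)
  ultimately have "z \<in> K \<or> z * r t \<in> K"
    using quad_ext_square_in_base[OF K] by blast
  then show ?case
  proof
    assume "z \<in> K"
    then obtain T where "T \<subseteq> {..<t}" "z * (\<Prod>j\<in>T. r j) \<in> \<rat>"
      using Suc.IH[OF r_sq _ Suc.prems(3)] unfolding K_def by blast
    then show ?case
      by (intro exI[of _ T]) auto
  next
    assume "z * r t \<in> K"
    moreover have "(z * r t)^2 \<in> \<rat>"
      using Suc.prems(1,3) by (simp add: power_mult_distrib)
    ultimately obtain T where T: "T \<subseteq> {..<t}" "z * r t * (\<Prod>j\<in>T. r j) \<in> \<rat>"
      using Suc.IH[OF r_sq] unfolding K_def by blast
    moreover have "finite T" "t \<notin> T"
      using T(1) finite_subset by auto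
    ultimately have "z * (\<Prod>j\<in>insert t T. r j) \<in> \<rat>"
      by (simp add: mult.assoc)
    with T(1) show ?case
      by (intro exI[of _ "insert t T"]) auto
  qed
qed

section \<open>Real embeddings and totally positive units\<close>

lemma real_embedding_Rats:
  assumes K: "is_subfield K" and \<sigma>: "real_embedding K \<sigma>" and "x \<in> \<rat>"
  shows "\<sigma> x = x"
proof -
  have add: "\<sigma> (u + v) = \<sigma> u + \<sigma> v" and mult: "\<sigma> (u * v) = \<sigma> u * \<sigma> v"
    if "u \<in> K" "v \<in> K" for u v
    using \<sigma> that by (simp_all add: real_embedding_def)
  have "\<sigma> 0 = 0"
    using add[of 0 0] subfield_0[OF K] by simp
  have of_nat: "\<sigma> (of_nat n) = of_nat n" for n
  proof (induction n)
    case (Suc n)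
    then show ?case
      using add[of 1 "of_nat n"] subfield_1[OF K] subfield_of_nat[OF K] \<sigma>
      by (simp add: real_embedding_def)
  qed (simp add: \<open>\<sigma> 0 = 0\<close>)
  have of_int: "\<sigma> (of_int n) = of_int n" for n
  proof (cases n rule: int_cases2)
    case (nonpos m)
    have "\<sigma> (- of_nat m) + \<sigma> (of_nat m) = 0"
      using add[of "- of_nat m" "of_nat m"] \<open>\<sigma> 0 = 0\<close> subfield_of_nat[OF K]
        subfield_uminus[OF K subfield_of_nat[OF K]] by simp
    with nonpos show ?thesis
      using of_nat[of m] by simp
  qed (simp add: of_nat)
  obtain a b where x: "x = of_int a / of_int b" and "b \<noteq> 0"
    using \<open>x \<in> \<rat>\<close> by (auto elim!: Rats_cases')
  then have "of_int a = x * of_int b"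
    by simp
  then have "of_int a = \<sigma> x * of_int b"
    using of_int[of a] of_int[of b] mult[of x "of_int b"]
      Rats_subset_subfield[OF K] \<open>x \<in> \<rat>\<close> subfield_of_int[OF K] by auto
  with \<open>of_int a = x * of_int b\<close> \<open>b \<noteq> 0\<close> show ?thesis
    by simp
qed

lemma real_embedding_sqrt:
  assumes K: "is_subfield K" and \<sigma>: "real_embedding K \<sigma>" and "s \<in> K" and "s^2 \<in> \<rat>"
  shows "\<sigma> s = s \<or> \<sigma> s = - s"
proof -
  have "(\<sigma> s)^2 = \<sigma> (s^2)"
    using \<sigma> \<open>s \<in> K\<close> by (simp add: real_embedding_def power2_eq_square)
  also have "\<dots> = s^2"
    by (rule real_embedding_Rats[OF K \<sigma> \<open>s^2 \<in> \<rat>\<close>])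
  finally show ?thesis
    by (simp add: power2_eq_iff)
qed

lemma totally_positive_quadratic:
  assumes K: "is_subfield K" and "s \<in> K" "s^2 \<in> \<rat>" "a \<in> \<rat>" "b \<in> \<rat>"
    and "a + b * s > 0" "a - b * s > 0"
  shows "totally_positive K (a + b * s)"
  unfolding totally_positive_def
proof (intro allI impI)
  fix \<sigma> assume \<sigma>: "real_embedding K \<sigma>"
  have "a \<in> K" "b \<in> K"
    using Rats_subset_subfield[OF K] assms(4,5) by auto
  then have "\<sigma> (a + b * s) = \<sigma> a + \<sigma> b * \<sigma> s"
    using \<sigma> \<open>s \<in> K\<close> subfield_mult[OF K] by (simp add: real_embedding_def)
  also have "\<dots> = a + b * \<sigma> s"
    using real_embedding_Rats[OF K \<sigma>] assms(4,5) by simp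
  finally show "\<sigma> (a + b * s) > 0"
    using real_embedding_sqrt[OF K \<sigma> \<open>s \<in> K\<close> \<open>s^2 \<in> \<rat>\<close>] assms(6,7) by auto
qed

lemma unit_of_field_quadratic:
  fixes n :: int
  assumes "x \<in> K" and "x^2 - of_int n * x + 1 = 0"
  shows "unit_of_field K x"
proof -
  define f :: "real poly" where "f = [:1, - of_int n, 1:]"
  have coeffs: "\<forall>i. Polynomial.coeff f i \<in> \<int>"
    by (auto simp: f_def coeff_pCons split: nat.splits)
  have "poly f x = 0"
    using assms(2) by (simp add: f_def algebra_simps power2_eq_square)
  moreover have "lead_coeff f = 1" "Polynomial.coeff f 0 = 1"
    by (simp_all add: f_def)
  ultimately have "algebraic_int x" "algebraic_int (inverse x)"
    using coeffs by (auto intro: algebraic_int.intros algebraic_int_inverse)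
  moreover have "x \<noteq> 0"
    using assms(2) by auto
  ultimately show ?thesis
    using \<open>x \<in> K\<close> by (simp add: unit_of_field_def)
qed

lemma mixed_pell_unit:
  fixes p q x y :: nat
  assumes K: "is_subfield K" and "sqrt (real (p * q)) \<in> K" and pell: "p * x^2 = q * y^2 + 1"
  defines "w \<equiv> x * sqrt p + y * sqrt q"
  shows "unit_of_field K (w^2)" "totally_positive K (w^2)" "w + inverse w = 2 * x * sqrt p"
proof -
  define w' where "w' = x * sqrt p - y * sqrt q"
  define s where "s = sqrt (real (p * q))"
  define A B where "A = real (x^2 * p + y^2 * q)" and "B = real (2 * x * y)"
  have "w * w' = 1"
    using arg_cong[OF pell, of real] by (simp add: w_def w'_def algebra_simps power2_eq_square)
  then have "inverse w = w'"
    by (rule inverse_unique)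
  have "x > 0" "p > 0"
    using pell by (auto intro!: gr0I)
  then have "w > 0"
    unfolding w_def by (simp add: add_pos_nonneg)
  show "w + inverse w = 2 * x * sqrt p"
    unfolding \<open>inverse w = w'\<close> by (simp add: w_def w'_def)
  have w2: "w^2 = A + B * s" and w'2: "w'^2 = A - B * s"
    by (simp_all add: w_def w'_def A_def B_def s_def power2_eq_square algebra_simps real_sqrt_mult)
  have "A \<in> \<rat>" "B \<in> \<rat>" "s^2 \<in> \<rat>" "s \<in> K"
    using assms(2) by (simp_all add: A_def B_def s_def)
  moreover have "A - B * s > 0"
  proof -
    have "w' \<noteq> 0"
      using \<open>w * w' = 1\<close> by auto
    then show ?thesis
      unfolding w'2[symmetric] by simp
  qed
  moreover have "A + B * s > 0"
    unfolding w2[symmetric] using \<open>w > 0\<close> by simp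
  ultimately show "totally_positive K (w^2)"
    unfolding w2 using totally_positive_quadratic[OF K] by blast
  \<comment> \<open>\<open>w\<^sup>2\<close> and \<open>w'\<^sup>2 = w\<^sup>-\<^sup>2\<close> are the roots of \<open>X\<^sup>2 - 2 A X + 1\<close>.\<close>
  have "(w^2)^2 - of_int (2 * (x^2 * p + y^2 * q)) * w^2 + 1 = 0"
  proof -
    have "of_int (2 * (x^2 * p + y^2 * q)) = w^2 + w'^2"
      by (simp add: w2 w'2 A_def)
    with \<open>w * w' = 1\<close> show ?thesis
      by (simp add: algebra_simps power2_eq_square)
  qed
  moreover have "w^2 \<in> K"
    unfolding w2 using \<open>A \<in> \<rat>\<close> \<open>B \<in> \<rat>\<close> \<open>s \<in> K\<close> Rats_subset_subfield[OF K]
    by (auto intro!: subfield_add subfield_mult K)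
  ultimately show "unit_of_field K (w^2)"
    by (rule unit_of_field_quadratic[rotated])
qed

section \<open>Independence modulo squares\<close>

lemma prod_add_inverse_in_subfield:
  assumes K: "is_subfield K" and "\<And>i. i \<in> S \<Longrightarrow> (w i)^2 \<in> K"
    and "y \<in> K" and "(\<Prod>i\<in>S. (w i)^2) = y^2"
  shows "(\<Prod>i\<in>S. w i + inverse (w i)) \<in> K"
proof -
  define W where "W = (\<Prod>i\<in>S. w i)"
  have "W^2 = y^2"
    unfolding W_def using assms(4) by (simp add: prod_power_distrib)
  then have "W \<in> K"
    using \<open>y \<in> K\<close> subfield_uminus[OF K] by (auto simp: power2_eq_iff)
  have "(\<Prod>i\<in>S. w i + inverse (w i)) = (\<Prod>i\<in>S. ((w i)^2 + 1) / w i)"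
  proof (rule prod.cong)
    fix i
    show "w i + inverse (w i) = ((w i)^2 + 1) / w i"
      by (cases "w i = 0") (simp_all add: field_simps power2_eq_square)
  qed simp
  also have "\<dots> = (\<Prod>i\<in>S. (w i)^2 + 1) / W"
    by (simp add: W_def prod_dividef)
  finally show ?thesis
    using K \<open>W \<in> K\<close> assms(2) by (auto intro!: subfield_divide subfield_prod subfield_add subfield_1)
qed

lemma real_sqrt_prod: "sqrt (\<Prod>i\<in>A. f i) = (\<Prod>i\<in>A. sqrt (f i))"
  by (induction A rule: infinite_finite_induct) (simp_all add: real_sqrt_mult)

lemma sqrt_nat_in_gen_field_sqrts:
  fixes m :: "nat \<Rightarrow> nat"
  assumes "sqrt (real n) \<in> gen_field ((\<lambda>j. sqrt (real (m j))) ` {..<t})"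
  shows "\<exists>T \<subseteq> {..<t}. is_square (n * (\<Prod>j\<in>T. m j))"
proof -
  obtain T where "T \<subseteq> {..<t}" and "sqrt (real n) * (\<Prod>j\<in>T. sqrt (real (m j))) \<in> \<rat>"
    using gen_field_square_in_Rats[OF _ assms] by auto
  moreover have "sqrt (real n) * (\<Prod>j\<in>T. sqrt (real (m j))) = sqrt (real (n * (\<Prod>j\<in>T. m j)))"
    by (simp add: real_sqrt_mult real_sqrt_prod)
  ultimately show ?thesis
    using sqrt_nat_in_Rats_imp_square by auto
qed

lemma multiplicity_prod_distinct_primes:
  fixes q :: "nat \<Rightarrow> nat"
  assumes "finite J" and "inj_on q (insert j0 J)" and "\<And>j. j \<in> insert j0 J \<Longrightarrow> prime (q j)"
  shows "multiplicity (q j0) (\<Prod>j\<in>J. q j) = (if j0 \<in> J then 1 else 0)"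
proof -
  have "multiplicity (q j0) (\<Prod>j\<in>J. q j) = (\<Sum>j\<in>J. multiplicity (q j0) (q j))"
  proof (rule prime_elem_multiplicity_prod_distrib)
    show "0 \<notin> q ` J"
      using assms(3) by (metis imageE insertCI not_prime_0)
  qed (use assms in auto)
  also have "\<dots> = (\<Sum>j\<in>J. if j = j0 then 1 else 0)"
  proof (rule sum.cong)
    fix j assume "j \<in> J"
    then have "j \<noteq> j0 \<Longrightarrow> q j0 \<noteq> q j"
      using assms(2) by (auto dest: inj_onD)
    with \<open>j \<in> J\<close> show "multiplicity (q j0) (q j) = (if j = j0 then 1 else 0)"
      using assms(3) by (auto simp: prime_multiplicity_other)
  qed simp
  also have "\<dots> = (if j0 \<in> J then 1 else 0)"
    using \<open>finite J\<close> by (simp add: sum.delta')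
  finally show ?thesis .
qed

lemma prod_distinct_primes_mult_square_imp_eq:
  fixes q :: "nat \<Rightarrow> nat"
  assumes "finite J1" "finite J2" "inj_on q (J1 \<union> J2)" "\<And>j. j \<in> J1 \<union> J2 \<Longrightarrow> prime (q j)"
    and "is_square ((\<Prod>j\<in>J1. q j) * (\<Prod>j\<in>J2. q j))"
  shows "J1 = J2"
proof -
  have "j0 \<in> J1 \<longleftrightarrow> j0 \<in> J2" if "j0 \<in> J1 \<union> J2" for j0
  proof -
    have "prime (q j0)"
      using assms(4) that by blast
    have nonzero: "(\<Prod>j\<in>J1. q j) \<noteq> 0" "(\<Prod>j\<in>J2. q j) \<noteq> 0"
      using assms(1,2,4) by (auto simp: prime_gt_0_nat dest: prime_gt_0_nat)
    have "even (multiplicity (q j0) ((\<Prod>j\<in>J1. q j) * (\<Prod>j\<in>J2. q j)))"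
      using assms(5) \<open>prime (q j0)\<close> by (simp add: is_nth_power_conv_multiplicity_nat)
    moreover have "multiplicity (q j0) (\<Prod>j\<in>J. q j) = (if j0 \<in> J then 1 else 0)"
      if "J = J1 \<or> J = J2" for J
      using that \<open>j0 \<in> J1 \<union> J2\<close> assms(1-4)
      by (intro multiplicity_prod_distinct_primes inj_on_subset[OF assms(3)]) auto
    ultimately have "even ((if j0 \<in> J1 then 1 else 0) + (if j0 \<in> J2 then 1 else (0::nat)))"
      using \<open>prime (q j0)\<close> nonzero by (simp add: prime_elem_multiplicity_mult_distrib)
    then show ?thesis
      by (auto split: if_splits)
  qed
  then show ?thesis
    by blast
qed

lemma prod_pairs:
  fixes T :: "nat set"
  assumes "finite T"
  shows "(\<Prod>i\<in>T. f (2 * i) * f (2 * i + 1)) = (\<Prod>j | j div 2 \<in> T. f j)"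
proof -
  have "{j. j div 2 \<in> T} = (\<lambda>i. 2 * i) ` T \<union> (\<lambda>i. 2 * i + 1) ` T"
  proof (rule Set.set_eqI)
    fix j :: nat
    show "j \<in> {j. j div 2 \<in> T} \<longleftrightarrow> j \<in> (\<lambda>i. 2 * i) ` T \<union> (\<lambda>i. 2 * i + 1) ` T"
      by (cases "even j") (auto elim!: evenE oddE)
  qed
  moreover have "(\<lambda>i. 2 * i) ` T \<inter> (\<lambda>i. 2 * i + 1) ` T = {}"
    by auto presburger
  moreover have "inj_on (\<lambda>i. 2 * i) T" "inj_on (\<lambda>i. 2 * i + 1) T"
    by (auto intro: inj_onI)
  ultimately show ?thesis
    using \<open>finite T\<close> by (simp add: prod.union_disjoint prod.reindex prod.distrib)
qed

lemma image_ne_union_of_pairs: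
  fixes ja :: "nat \<Rightarrow> nat"
  assumes "S \<noteq> {}" and ja: "\<And>i. i \<in> S \<Longrightarrow> ja i div 2 = i"
  shows "ja ` S \<noteq> {j. j div 2 \<in> T}"
proof
  assume eq: "ja ` S = {j. j div 2 \<in> T}"
  obtain i where "i \<in> S"
    using assms(1) by blast
  \<comment> \<open>The partner \<open>j'\<close> of \<open>ja i\<close> in the pair \<open>{2i, 2i+1}\<close> would have to be chosen as well.\<close>
  define j' where "j' = (if even (ja i) then ja i + 1 else ja i - 1)"
  have "j' div 2 = i" "j' \<noteq> ja i"
    using ja[OF \<open>i \<in> S\<close>] unfolding j'_def by presburger+
  have "i \<in> T"
    using eq ja[OF \<open>i \<in> S\<close>] \<open>i \<in> S\<close> by force
  with eq \<open>j' div 2 = i\<close> obtain k where "k \<in> S" "j' = ja k"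
    by (metis (mono_tags, lifting) imageE mem_Collect_eq)
  with ja \<open>j' div 2 = i\<close> \<open>j' \<noteq> ja i\<close> show False
    by metis
qed

lemma sqrt_prod_in_subfield:
  fixes n :: "nat \<Rightarrow> nat" and w c :: "nat \<Rightarrow> real"
  assumes K: "is_subfield K" and "finite S"
    and w: "\<And>i. i \<in> S \<Longrightarrow> (w i)^2 \<in> K \<and> c i \<in> \<rat> \<and> c i \<noteq> 0 \<and> w i + inverse (w i) = c i * sqrt (n i)"
    and "y \<in> K" and square: "(\<Prod>i\<in>S. (w i)^2) = y^2"
  shows "sqrt (real (\<Prod>i\<in>S. n i)) \<in> K"
proof -
  define C where "C = (\<Prod>i\<in>S. c i)"
  have "C \<in> \<rat>" "C \<noteq> 0"
    using w \<open>finite S\<close> by (auto simp: C_def prod_zero_iff subfield_prod[OF is_subfield_Rats])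
  have "(\<Prod>i\<in>S. w i + inverse (w i)) = (\<Prod>i\<in>S. c i * sqrt (n i))"
    using w by (intro prod.cong) simp_all
  also have "\<dots> = C * sqrt (real (\<Prod>i\<in>S. n i))"
    by (simp add: C_def real_sqrt_prod prod.distrib)
  finally have sqrt_eq: "sqrt (real (\<Prod>i\<in>S. n i)) = (\<Prod>i\<in>S. w i + inverse (w i)) / C"
    using \<open>C \<noteq> 0\<close> by simp
  have "(\<Prod>i\<in>S. w i + inverse (w i)) \<in> K"
    using w by (intro prod_add_inverse_in_subfield[OF K _ \<open>y \<in> K\<close> square]) simp
  moreover have "C \<in> K"
    using Rats_subset_subfield[OF K] \<open>C \<in> \<rat>\<close> by blast
  ultimately show ?thesis
    unfolding sqrt_eq by (rule subfield_divide[OF K])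
qed

lemma prod_choices_times_prod_pairs_not_square:
  fixes q ja :: "nat \<Rightarrow> nat"
  assumes inj: "inj_on q {..<2 * t}" and primes: "\<And>j. j < 2 * t \<Longrightarrow> prime (q j)"
    and S: "S \<subseteq> {..<t}" "S \<noteq> {}" and ja: "\<And>i. i \<in> S \<Longrightarrow> ja i div 2 = i"
    and T: "T \<subseteq> {..<t}"
  shows "\<not> is_square ((\<Prod>i\<in>S. q (ja i)) * (\<Prod>i\<in>T. q (2 * i) * q (2 * i + 1)))"
proof
  assume sq: "is_square ((\<Prod>i\<in>S. q (ja i)) * (\<Prod>i\<in>T. q (2 * i) * q (2 * i + 1)))"
  have "inj_on ja S"
    using ja by (metis inj_onI)
  have "finite T"
    using T finite_subset by blast
  have "(\<Prod>j\<in>ja ` S. q j) = (\<Prod>i\<in>S. q (ja i))"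
    using prod.reindex[OF \<open>inj_on ja S\<close>, of q] by simp
  moreover have "(\<Prod>j | j div 2 \<in> T. q j) = (\<Prod>i\<in>T. q (2 * i) * q (2 * i + 1))"
    using prod_pairs[OF \<open>finite T\<close>, of q] by simp
  ultimately have sq': "is_square ((\<Prod>j\<in>ja ` S. q j) * (\<Prod>j | j div 2 \<in> T. q j))"
    using sq by simp
  have "ja i < 2 * t" if "i \<in> S" for i
    using ja[OF that] S(1) that by auto
  moreover have "j < 2 * t" if "j div 2 \<in> T" for j
    using that T by auto
  ultimately have "ja ` S \<union> {j. j div 2 \<in> T} \<subseteq> {..<2 * t}"
    by auto
  then have "ja ` S = {j. j div 2 \<in> T}"
    using primes finite_subset[OF _ finite_lessThan]
    by (intro prod_distinct_primes_mult_square_imp_eq[OF _ _ inj_on_subset[OF inj] _ sq']) auto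
  then show False
    using image_ne_union_of_pairs[OF S(2) ja] by blast
qed

lemma prod_units_not_square:
  fixes t :: nat and q ja :: "nat \<Rightarrow> nat" and w c :: "nat \<Rightarrow> real"
  defines "L \<equiv> gen_field ((\<lambda>i. sqrt (real (q (2 * i) * q (2 * i + 1)))) ` {..<t})"
  assumes "inj_on q {..<2 * t}" and "\<And>j. j < 2 * t \<Longrightarrow> prime (q j)"
    and w: "\<And>i. i < t \<Longrightarrow> (w i)^2 \<in> L \<and> c i \<in> \<rat> \<and> c i \<noteq> 0 \<and> ja i div 2 = i
      \<and> w i + inverse (w i) = c i * sqrt (q (ja i))"
    and S: "S \<subseteq> {..<t}" "S \<noteq> {}" and "y \<in> L"
  shows "(\<Prod>i\<in>S. (w i)^2) \<noteq> y^2"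
proof
  assume "(\<Prod>i\<in>S. (w i)^2) = y^2"
  have St: "\<And>i. i \<in> S \<Longrightarrow> i < t"
    using S(1) by auto
  have "sqrt (real (\<Prod>i\<in>S. q (ja i))) \<in> L"
    using w[OF St] \<open>(\<Prod>i\<in>S. (w i)^2) = y^2\<close> \<open>y \<in> L\<close> finite_subset[OF S(1)]
    by (intro sqrt_prod_in_subfield[where K = L and c = c]) (simp_all add: L_def is_subfield_gen_field)
  then obtain T where "T \<subseteq> {..<t}"
    and "is_square ((\<Prod>i\<in>S. q (ja i)) * (\<Prod>i\<in>T. q (2 * i) * q (2 * i + 1)))"
    using sqrt_nat_in_gen_field_sqrts[of _ "\<lambda>i. q (2 * i) * q (2 * i + 1)" t]
    unfolding L_def by blast
  with prod_choices_times_prod_pairs_not_square[OF assms(2,3) S] w[OF St] show False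
    by blast
qed

lemma totally_positive_unit_of_prime_pair:
  fixes p q :: nat
  assumes K: "is_subfield K" and "sqrt (real (p * q)) \<in> K"
    and "prime p" "prime q" "p \<noteq> q" "p mod 4 = 3" "q mod 4 = 3"
  obtains w c where "unit_of_field K (w^2)" "totally_positive K (w^2)" "c \<in> \<rat>" "c \<noteq> 0"
    "w + inverse w = c * sqrt p \<or> w + inverse w = c * sqrt q"
proof -
  obtain x y where "p * x^2 = q * y^2 + 1 \<or> q * x^2 = p * y^2 + 1"
    using mixed_pell_solvable[OF assms(3-7)] by blast
  then show thesis
  proof
    assume pell: "p * x^2 = q * y^2 + 1"
    then have "x \<noteq> 0"
      by (cases "x = 0") simp_all
    with mixed_pell_unit[OF K assms(2) pell] show thesis
      by (intro that[of "x * sqrt p + y * sqrt q" "2 * x"]) simp_all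
  next
    assume pell: "q * x^2 = p * y^2 + 1"
    then have "x \<noteq> 0"
      by (cases "x = 0") simp_all
    moreover have "sqrt (real (q * p)) \<in> K"
      using assms(2) by (simp add: mult.commute)
    ultimately show thesis
      using mixed_pell_unit[OF K _ pell] by (intro that[of "x * sqrt q + y * sqrt p" "2 * x"]) simp_all
  qed
qed

lemma totally_positive_units_of_prime_pairs:
  fixes t :: nat and q :: "nat \<Rightarrow> nat"
  defines "L \<equiv> gen_field ((\<lambda>i. sqrt (real (q (2 * i) * q (2 * i + 1)))) ` {..<t})"
  assumes inj: "inj_on q {..<2 * t}" and primes: "\<And>j. j < 2 * t \<Longrightarrow> prime (q j)"
    and mod_4: "\<And>j. j < 2 * t \<Longrightarrow> q j mod 4 = 3"
  obtains w c :: "nat \<Rightarrow> real" and ja :: "nat \<Rightarrow> nat"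
  where "\<And>i. i < t \<Longrightarrow> unit_of_field L ((w i)^2) \<and> totally_positive L ((w i)^2)
      \<and> c i \<in> \<rat> \<and> c i \<noteq> 0 \<and> ja i div 2 = i \<and> w i + inverse (w i) = c i * sqrt (q (ja i))"
proof -
  have "is_subfield L"
    unfolding L_def by (rule is_subfield_gen_field)
  have "\<exists>w c j. unit_of_field L (w^2) \<and> totally_positive L (w^2) \<and> c \<in> \<rat> \<and> c \<noteq> 0
      \<and> j div 2 = i \<and> w + inverse w = c * sqrt (q j)" if "i < t" for i
  proof -
    have i: "2 * i < 2 * t" "2 * i + 1 < 2 * t"
      using that by simp_all
    have sqrt_in_L: "sqrt (real (q (2 * i) * q (2 * i + 1))) \<in> L"
      using that gen_field_superset[of "(\<lambda>i. sqrt (real (q (2 * i) * q (2 * i + 1)))) ` {..<t}"]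
      unfolding L_def by blast
    have "q (2 * i) \<noteq> q (2 * i + 1)"
      using inj_onD[OF inj, of "2 * i" "2 * i + 1"] i by auto
    then obtain w c where "unit_of_field L (w^2)" "totally_positive L (w^2)" "c \<in> \<rat>" "c \<noteq> 0"
      "w + inverse w = c * sqrt (q (2 * i)) \<or> w + inverse w = c * sqrt (q (2 * i + 1))"
      by (rule totally_positive_unit_of_prime_pair[OF \<open>is_subfield L\<close> sqrt_in_L
            primes[OF i(1)] primes[OF i(2)] _ mod_4[OF i(1)] mod_4[OF i(2)]])
    moreover have "(2 * i) div 2 = i" "(2 * i + 1) div 2 = i"
      by simp_all
    ultimately show ?thesis
      by blast
  qed
  then show thesis
    using that by metis
qed

theorem theorem6p11:
  fixes t :: nat and q :: "nat \<Rightarrow> nat"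
  assumes "t \<ge> 1"
    and "inj_on q {..<2*t}"
    and "\<And>i. i < 2*t \<Longrightarrow> prime (q i)"
    and "\<And>i. i < 2*t \<Longrightarrow> q i mod 4 = 3"
  defines "L \<equiv> gen_field {sqrt (real (q (2*i) * q (2*i+1))) | i. i < t}"
  shows "\<exists>u :: nat \<Rightarrow> real.
           (\<forall>i<t. unit_of_field L (u i) \<and> totally_positive L (u i)) \<and>
           (\<forall>S. S \<subseteq> {..<t} \<and> S \<noteq> {} \<longrightarrow> \<not> (\<exists>y\<in>L. (\<Prod>i\<in>S. u i) = y ^ 2))"
proof -
  have L_eq: "L = gen_field ((\<lambda>i. sqrt (real (q (2 * i) * q (2 * i + 1)))) ` {..<t})"
    unfolding L_def by (rule arg_cong[where f = gen_field]) blast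
  obtain w c ja where pick: "\<And>i. i < t \<Longrightarrow> unit_of_field L ((w i)^2) \<and> totally_positive L ((w i)^2)
      \<and> c i \<in> \<rat> \<and> c i \<noteq> 0 \<and> ja i div 2 = i \<and> w i + inverse (w i) = c i * sqrt (q (ja i))"
    using totally_positive_units_of_prime_pairs[OF assms(2-4), folded L_eq] by blast
  show ?thesis
  proof (intro exI[of _ "\<lambda>i. (w i)^2"] conjI allI impI notI)
    fix i assume "i < t"
    with pick show "unit_of_field L ((w i)^2)" "totally_positive L ((w i)^2)"
      by simp_all
  next
    fix S assume "S \<subseteq> {..<t} \<and> S \<noteq> {}"
    moreover assume "\<exists>y\<in>L. (\<Prod>i\<in>S. (w i)^2) = y^2"
    ultimately show False
      using prod_units_not_square[where q = q and t = t and S = S and w = w and c = c and ja = ja, folded L_eq]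
        assms(2,3) pick unit_of_field_def by blast
  qed
qed

end
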